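(* For every integer $x\ge3$, the number $\frac{x^2(x^2+4)}{5x^2-4}$ is not an integer. *)

theory Defs
  imports Complex_Main
begin

end

theory Submission
  imports Defs
begin

text \<open>
  Since \<open>25 n (n + 4) = (5n - 4)(5n + 24) + 96\<close>, the number \<open>5n - 4\<close> can only divide
  \<open>n (n + 4)\<close> if it divides 96. For \<open>n = x\<^sup>2 \<ge> 9\<close> this forces \<open>41 \<le> 5x\<^sup>2 - 4 \<le> 96\<close>,
  leaving only \<open>x \<in> {3, 4}\<close>, where \<open>5x\<^sup>2 - 4\<close> is 41 or 76, neither a divisor of 96.
\<close>

lemma dvd_96_if_dvd_mult_plus_4:
  fixes n :: int
  assumes "5 * n - 4 dvd n * (n + 4)"
  shows "5 * n - 4 dvd 96"
proof -
  have "96 = 25 * (n * (n + 4)) - (5 * n - 4) * (5 * n + 24)"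
    by (simp add: algebra_simps)
  also have "5 * n - 4 dvd \<dots>"
    using assms by (rule dvd_diff[OF dvd_mult dvd_triv_left])
  finally show ?thesis .
qed

theorem mainTheorem16:
  fixes x :: int
  assumes "x \<ge> 3"
  shows "(of_int (x^2 * (x^2 + 4)) / of_int (5 * x^2 - 4) :: rat) \<notin> \<int>"
proof
  assume "(of_int (x^2 * (x^2 + 4)) / of_int (5 * x^2 - 4) :: rat) \<in> \<int>"
  moreover have "x^2 \<ge> 3^2"
    using assms by (intro power_mono) simp_all
  ultimately have "5 * x^2 - 4 dvd x^2 * (x^2 + 4)"
    unfolding of_int_div_of_int_in_Ints_iff by auto
  then have dvd_96: "5 * x^2 - 4 dvd 96"
    by (rule dvd_96_if_dvd_mult_plus_4)
  then have "5 * x^2 - 4 \<le> 96"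
    by (simp add: zdvd_imp_le)
  then have "x < 5"
    using power_mono[of 5 x 2] by (cases "x < 5") auto
  with assms have "x = 3 \<or> x = 4"
    by auto
  with dvd_96 show False
    by auto
qed

end
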